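(* Let $z\in\mathbb{R}_{\ge0}^s$ with $\sum_j z_j>0$, $\eta>0$, and let $\tilde z_k=\max\big(z_k-\eta\frac{\partial\mathcal{H}}{\partial z_k}(z),0\big)$ (with $\tilde z_k=0$ when $z_k=0$), and suppose $\sum_j\tilde z_j>0$. Let $p_i=z_i/\sum_j z_j$ and $\tilde p_i=\tilde z_i/\sum_j\tilde z_j$. Then for all $k,k'$ with $z_k<z_{k'}$ we have $\tilde p_k\le\tilde p_{k'}$, i.e. the order of state probabilities is preserved.
   Context: $\mathcal{H}(z)=-\sum_i \frac{z_i}{\sum_j z_j}\log\frac{z_i}{\sum_j z_j}$ with $0\log0=0$; for $z_k>0$ the gradient is the partial derivative, and for $z_k=0$ it is regarded as $+\infty$. *)

theory Defs
  imports "HOL-Analysis.Analysis"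
begin

text \<open>Shannon entropy of the normalized vector z / sum z, with the convention 0 log 0 = 0.
  Vectors in R^s are modelled as real^'n with 'n a finite index type (s = CARD('n)).\<close>
definition entropy :: "real^'n::finite \<Rightarrow> real" where
  "entropy z = - (\<Sum>i\<in>UNIV. let p = z$i / (\<Sum>j\<in>UNIV. z$j) in
                     (if p = 0 then 0 else p * ln p))"

text \<open>Partial derivative of the entropy with respect to the k-th coordinate at z
  (meaningful for z k > 0).\<close>
definition entropy_partial :: "real^'n::finite \<Rightarrow> 'n \<Rightarrow> real" where
  "entropy_partial z k = deriv (\<lambda>t. entropy (\<chi> j. if j = k then t else z$j)) (z$k)"

text \<open>One projected gradient step: for z_k > 0, max(z_k - eta dH/dz_k, 0);
  for z_k = 0 the gradient is regarded as +infinity, so the result is 0.\<close>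
definition grad_step :: "real \<Rightarrow> real^'n::finite \<Rightarrow> real^'n" where
  "grad_step \<eta> z = (\<chi> k. if z$k = 0 then 0 else max (z$k - \<eta> * entropy_partial z k) 0)"

end

theory Submission
  imports Defs
begin

(* Writing S for the total mass, the partial derivative of the entropy is
   -ln z_k / S + (sum_i z_i ln z_i) / S^2, whose second summand does not depend on k.
   Hence on positive coordinates the unclipped step z_k - eta dH/dz_k equals
   z_k + eta ln z_k / S minus a constant, which is increasing in z_k; clipping at 0,
   sending zero coordinates to 0 and dividing by the positive new total all preserve
   this order. *)

definition xlnx :: "real \<Rightarrow> real" where
  "xlnx x = (if x = 0 then 0 else x * ln x)"

lemma entropy_eq_ln_sum_minus:
  fixes w :: "real^'n::finite"
  assumes nonneg: "\<And>j. w$j \<ge> 0" and pos: "(\<Sum>j\<in>UNIV. w$j) > 0"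
  shows "entropy w = ln (\<Sum>j\<in>UNIV. w$j) - (\<Sum>i\<in>UNIV. xlnx (w$i)) / (\<Sum>j\<in>UNIV. w$j)"
proof -
  define S where "S = (\<Sum>j\<in>UNIV. w$j)"
  have S_pos: "S > 0" using pos by (simp add: S_def)
  have summand: "(let p = w$i / S in (if p = 0 then 0 else p * ln p))
        = (xlnx (w$i) - w$i * ln S) / S" for i
  proof (cases "w$i = 0")
    case False
    then have "w$i > 0" using nonneg[of i] by simp
    then show ?thesis using S_pos False by (simp add: xlnx_def ln_div field_simps)
  qed (simp add: xlnx_def)
  have "entropy w = - (\<Sum>i\<in>UNIV. (xlnx (w$i) - w$i * ln S) / S)"
    unfolding entropy_def S_def[symmetric] using summand by simp
  also have "\<dots> = - (((\<Sum>i\<in>UNIV. xlnx (w$i)) - S * ln S) / S)"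
    by (simp add: sum_divide_distrib[symmetric] sum_subtractf sum_distrib_right[symmetric] S_def)
  also have "\<dots> = ln S - (\<Sum>i\<in>UNIV. xlnx (w$i)) / S"
    using S_pos by (simp add: field_simps)
  finally show ?thesis unfolding S_def .
qed

lemma sum_vec_component_update:
  fixes h :: "'a \<Rightarrow> 'b::ab_group_add" and z :: "'a^'n::finite"
  shows "(\<Sum>i\<in>UNIV. h ((\<chi> j. if j = k then t else z$j) $ i))
           = (\<Sum>i\<in>UNIV. h (z$i)) - h (z$k) + h t"
  using sum.remove[of UNIV k "\<lambda>i. h ((\<chi> j. if j = k then t else z$j) $ i)"]
        sum.remove[of UNIV k "\<lambda>i. h (z$i)"]
  by (simp add: algebra_simps)

lemma entropy_component_update:
  fixes z :: "real^'n::finite"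
  assumes nonneg: "\<And>j. z$j \<ge> 0" and t: "t > 0"
  shows "entropy (\<chi> j. if j = k then t else z$j)
           = ln ((\<Sum>j\<in>UNIV. z$j) - z$k + t)
             - ((\<Sum>i\<in>UNIV. xlnx (z$i)) - xlnx (z$k) + t * ln t) / ((\<Sum>j\<in>UNIV. z$j) - z$k + t)"
proof -
  let ?w = "(\<chi> j. if j = k then t else z$j) :: real^'n"
  have rest_nonneg: "(\<Sum>j\<in>UNIV. z$j) - z$k \<ge> 0"
    using sum.remove[of UNIV k "\<lambda>j. z$j"] nonneg by (simp add: sum_nonneg)
  have sum_w: "(\<Sum>j\<in>UNIV. ?w$j) = (\<Sum>j\<in>UNIV. z$j) - z$k + t"
    using sum_vec_component_update[of "\<lambda>x. x" k t z] by simp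
  have xlnx_w: "(\<Sum>i\<in>UNIV. xlnx (?w$i)) = (\<Sum>i\<in>UNIV. xlnx (z$i)) - xlnx (z$k) + t * ln t"
    using sum_vec_component_update[of xlnx k t z] t by (simp add: xlnx_def)
  have "entropy ?w = ln (\<Sum>j\<in>UNIV. ?w$j) - (\<Sum>i\<in>UNIV. xlnx (?w$i)) / (\<Sum>j\<in>UNIV. ?w$j)"
    by (rule entropy_eq_ln_sum_minus) (use nonneg t rest_nonneg sum_w in auto)
  then show ?thesis unfolding sum_w xlnx_w .
qed

lemma entropy_partial_eq:
  fixes z :: "real^'n::finite"
  assumes nonneg: "\<And>j. z$j \<ge> 0" and zk: "z$k > 0"
  shows "entropy_partial z k = - ln (z$k) / (\<Sum>j\<in>UNIV. z$j)
           + (\<Sum>i\<in>UNIV. xlnx (z$i)) / (\<Sum>j\<in>UNIV. z$j)^2"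
proof -
  define S where "S = (\<Sum>j\<in>UNIV. z$j)"
  define G where "G = (\<Sum>i\<in>UNIV. xlnx (z$i))"
  define F where "F = (\<lambda>t. ln (S - z$k + t) - (G - xlnx (z$k) + t * ln t) / (S - z$k + t))"
  have S_pos: "S > 0"
    using zk nonneg member_le_sum[of k UNIV "\<lambda>j. z$j"] by (simp add: S_def)
  have locally_F: "\<forall>\<^sub>F t in nhds (z$k). entropy (\<chi> j. if j = k then t else z$j) = F t"
    using eventually_nhds_in_open[of "{0<..}" "z$k"] zk
    by (auto elim!: eventually_mono simp: entropy_component_update[OF nonneg] F_def S_def G_def)
  have "(F has_real_derivative
      1 / S - ((ln (z$k) + 1) * S - (G - xlnx (z$k) + z$k * ln (z$k))) / S\<^sup>2) (at (z$k))"
    unfolding F_def using S_pos zk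
    by (auto intro!: derivative_eq_intros simp: power2_eq_square)
  then have "deriv F (z$k) = 1 / S - ((ln (z$k) + 1) * S - G) / S\<^sup>2"
    using zk by (simp add: DERIV_imp_deriv xlnx_def)
  also have "\<dots> = - ln (z$k) / S + G / S\<^sup>2"
    using S_pos by (simp add: field_simps power2_eq_square)
  finally have "deriv F (z$k) = - ln (z$k) / S + G / S\<^sup>2" .
  moreover have "entropy_partial z k = deriv F (z$k)"
    unfolding entropy_partial_def using locally_F by (rule deriv_cong_ev) simp
  ultimately show ?thesis by (simp add: S_def G_def)
qed

lemma grad_step_mono:
  fixes z :: "real^'n::finite"
  assumes nonneg: "\<And>j. z$j \<ge> 0" and eta: "\<eta> \<ge> 0" and le: "z$k \<le> z$k'"
  shows "grad_step \<eta> z $ k \<le> grad_step \<eta> z $ k'"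
proof (cases "z$k = 0")
  case False
  define S where "S = (\<Sum>j\<in>UNIV. z$j)"
  define c where "c = (\<Sum>i\<in>UNIV. xlnx (z$i)) / S\<^sup>2"
  have zk: "z$k > 0" and zk': "z$k' > 0" using False nonneg[of k] le by auto
  have S_pos: "S > 0"
    using zk nonneg member_le_sum[of k UNIV "\<lambda>j. z$j"] by (simp add: S_def)
  have "\<eta> * (ln (z$k) / S) \<le> \<eta> * (ln (z$k') / S)"
    using zk le S_pos eta by (intro mult_left_mono divide_right_mono) auto
  then have "z$k - \<eta> * (- ln (z$k) / S + c) \<le> z$k' - \<eta> * (- ln (z$k') / S + c)"
    using le by (simp add: algebra_simps)
  then show ?thesis
    using zk zk' entropy_partial_eq[OF nonneg zk] entropy_partial_eq[OF nonneg zk']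
    by (simp add: grad_step_def S_def c_def)
qed (simp add: grad_step_def)

theorem corollary8:
  fixes z :: "real^'n::finite" and \<eta> :: real and k k' :: 'n
  assumes nonneg: "\<And>j. z$j \<ge> 0"
    and pos: "(\<Sum>j\<in>UNIV. z$j) > 0"
    and eta: "\<eta> > 0"
    and pos_step: "(\<Sum>j\<in>UNIV. grad_step \<eta> z $ j) > 0"
    and lt: "z$k < z$k'"
  shows "grad_step \<eta> z $ k / (\<Sum>j\<in>UNIV. grad_step \<eta> z $ j)
         \<le> grad_step \<eta> z $ k' / (\<Sum>j\<in>UNIV. grad_step \<eta> z $ j)"
proof -
  have "grad_step \<eta> z $ k \<le> grad_step \<eta> z $ k'"
    using grad_step_mono[OF nonneg] eta lt by simp
  then show ?thesis using pos_step by (simp add: divide_right_mono)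
qed

end
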